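(* There exists a Knuth-closed set $S\subseteq S_n$ with $|S|=p$ and $\iota_n,\delta_n\notin S$ if and only if $$p\in\sum_{\lambda\vdash n,\ \lambda\ne(1^n),\ \lambda\ne(n)} f^\lambda\{0,f^\lambda\}.$$
   Context: Under the Robinson–Schensted correspondence each $w\in S_n$ maps to a pair $(P,Q)$ of standard Young tableaux of the same shape. For a standard Young tableau $P$ of size $n$, the Knuth class $K(P)$ is the set of $w\in S_n$ whose image is $(P,Q)$ for some $Q$. A set is Knuth-closed if it is a union of Knuth classes. $f^\lambda$ is the number of standard Young tableaux of shape $\lambda$. For $A,B\subseteq\mathbb Z$, $A+B=\{a+b:a\in A,b\in B\}$, $cA$ denotes the sum of $c$ copies of $A$, and $\sum$ of sets denotes iterated sumset. $\iota_n=12\cdots n$, $\delta_n=n\cdots21$. *)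

theory Defs
  imports Main
begin

text \<open>Permutations of S_n in one-line notation: lists w = w_1 ... w_n.\<close>
definition perms :: "nat \<Rightarrow> nat list set" where
  "perms n = {w. distinct w \<and> set w = {1..n}}"

definition iota :: "nat \<Rightarrow> nat list" where
  "iota n = [1..<Suc n]"

definition delta :: "nat \<Rightarrow> nat list" where
  "delta n = rev [1..<Suc n]"

text \<open>Tableaux as lists of rows (top row first, English convention).\<close>
type_synonym tableau = "nat list list"

definition is_partition :: "nat \<Rightarrow> nat list \<Rightarrow> bool" where
  "is_partition n lam \<longleftrightarrow> sorted_wrt (\<ge>) lam \<and> 0 \<notin> set lam \<and> sum_list lam = n"

definition shape :: "tableau \<Rightarrow> nat list" where
  "shape T = map length T"

definition is_SYT :: "nat \<Rightarrow> tableau \<Rightarrow> bool" where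
  "is_SYT n T \<longleftrightarrow>
     is_partition n (shape T) \<and>
     distinct (concat T) \<and> set (concat T) = {1..n} \<and>
     (\<forall>r\<in>set T. sorted_wrt (<) r) \<and>
     (\<forall>i j. Suc i < length T \<and> j < length (T ! Suc i) \<longrightarrow> T ! i ! j < T ! Suc i ! j)"

definition flam :: "nat list \<Rightarrow> nat" where
  "flam lam = card {T. is_SYT (sum_list lam) T \<and> shape T = lam}"

fun row_ins :: "nat list \<Rightarrow> nat \<Rightarrow> nat list \<times> nat option" where
  "row_ins [] x = ([x], None)"
| "row_ins (y # ys) x =
     (if x < y then (x # ys, Some y)
      else (let (ys', b) = row_ins ys x in (y # ys', b)))"

text \<open>Insertion into a tableau; also returns the index of the row where a new cell was created.\<close>
fun ins :: "tableau \<Rightarrow> nat \<Rightarrow> tableau \<times> nat" where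
  "ins [] x = ([[x]], 0)"
| "ins (r # rs) x =
     (case row_ins r x of
        (r', None) \<Rightarrow> (r' # rs, 0)
      | (r', Some y) \<Rightarrow> (let (rs', i) = ins rs y in (r' # rs', Suc i)))"

definition add_at :: "tableau \<Rightarrow> nat \<Rightarrow> nat \<Rightarrow> tableau" where
  "add_at Q i k = (if i < length Q then Q[i := Q ! i @ [k]] else Q @ [[k]])"

fun rs_go :: "nat list \<Rightarrow> tableau \<times> tableau \<Rightarrow> nat \<Rightarrow> tableau \<times> tableau" where
  "rs_go [] PQ k = PQ"
| "rs_go (x # xs) (P, Q) k =
     (let (P', i) = ins P x in rs_go xs (P', add_at Q i k) (Suc k))"

definition RS :: "nat list \<Rightarrow> tableau \<times> tableau" where
  "RS w = rs_go w ([], []) 1"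

definition knuth_class :: "nat \<Rightarrow> tableau \<Rightarrow> nat list set" where
  "knuth_class n P = {w \<in> perms n. \<exists>Q. RS w = (P, Q)}"

definition knuth_closed :: "nat \<Rightarrow> nat list set \<Rightarrow> bool" where
  "knuth_closed n S \<longleftrightarrow>
     (\<exists>\<P>. (\<forall>P\<in>\<P>. is_SYT n P) \<and> S = (\<Union>P\<in>\<P>. knuth_class n P))"

definition sumset_over :: "'i set \<Rightarrow> ('i \<Rightarrow> nat set) \<Rightarrow> nat set" where
  "sumset_over I A = {(\<Sum>i\<in>I. a i) | a. \<forall>i\<in>I. a i \<in> A i}"

definition nfold :: "nat \<Rightarrow> nat set \<Rightarrow> nat set" where
  "nfold c A = sumset_over {..<c} (\<lambda>_. A)"

end

theory Submission
  imports Defs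
begin

text \<open>
  For a fixed insertion tableau P, Robinson-Schensted restricts to a bijection between the
  Knuth class of P and the standard tableaux of the shape of P: it is inverted by removing the
  largest entry of the recording tableau and reverse-bumping the corresponding corner of P.
  So the Knuth classes are pairwise disjoint of size f^lambda, and a Knuth-closed set of size p
  is a union of classes K(P) over a set of standard tableaux P whose f^(shape P) sum to p.
  The identity and the reversal have insertion tableaux the single row and the single column,
  which are the only standard tableaux of shapes (n) and (1^n). Avoiding both therefore means
  choosing, for every other shape lambda, some k_lambda of its f^lambda tableaux, which
  contributes f^lambda k_lambda; the possible values form f^lambda {0, f^lambda}.
\<close>

section \<open>Row insertion and its inverse\<close>

definition row_pos :: "nat list \<Rightarrow> nat \<Rightarrow> nat" where
  "row_pos r x = length (filter (\<lambda>z. z < x) r)"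

lemma filter_less_eq_takeWhile:
  "sorted_wrt (<) (r::nat list) \<Longrightarrow> filter (\<lambda>z. z < x) r = takeWhile (\<lambda>z. z < x) r"
proof (induction r)
  case (Cons y ys)
  then show ?case
    by (cases "y < x") (auto simp: takeWhile_eq_Nil_iff intro!: filter_False dest!: hd_in_set)
qed simp

lemma row_pos_le_length: "row_pos r x \<le> length r"
  unfolding row_pos_def by simp

lemma nth_less_row_pos: "sorted_wrt (<) r \<Longrightarrow> j < row_pos r x \<Longrightarrow> r ! j < x"
  unfolding row_pos_def filter_less_eq_takeWhile
  by (metis takeWhile_nth nth_mem set_takeWhileD)

lemma row_pos_le_nth:
  assumes s: "sorted_wrt (<) r" and j: "row_pos r x \<le> j" "j < length r"
  shows "x \<le> r ! j"
proof -
  have "\<not> r ! row_pos r x < x"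
    using nth_length_takeWhile[of "\<lambda>z. z < x" r] j s
    by (simp add: row_pos_def filter_less_eq_takeWhile)
  moreover have "r ! row_pos r x \<le> r ! j"
    using s j by (cases "row_pos r x = j") (auto simp: sorted_wrt_iff_nth_less less_imp_le)
  ultimately show ?thesis by simp
qed

lemma row_pos_eqI:
  assumes "c \<le> length r" "\<forall>j<c. r ! j < x" "\<forall>j. c \<le> j \<and> j < length r \<longrightarrow> x \<le> r ! j"
  shows "row_pos r x = c"
proof -
  have "filter (\<lambda>z. z < x) (take c r) = take c r"
    using assms(1,2) by (auto simp: filter_id_conv in_set_conv_nth)
  moreover have "filter (\<lambda>z. z < x) (drop c r) = []"
    using assms(1,3) by (auto simp: filter_empty_conv in_set_conv_nth not_less)
  ultimately show ?thesis
    unfolding row_pos_def using assms(1)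
    by (metis append_take_drop_id filter_append length_take min.absorb2 append_Nil2)
qed

lemma row_ins_eq:
  "sorted_wrt (<) r \<Longrightarrow> x \<notin> set r \<Longrightarrow>
   row_ins r x = (if row_pos r x = length r then (r @ [x], None)
                  else (r[row_pos r x := x], Some (r ! row_pos r x)))"
proof (induction r)
  case (Cons y ys)
  show ?case
  proof (cases "x < y")
    case True
    then have "row_pos (y # ys) x = 0"
      using Cons.prems by (auto simp: row_pos_def filter_empty_conv)
    then show ?thesis using True by simp
  next
    case False
    then have "y < x" using Cons.prems by auto
    then show ?thesis using Cons False by (auto simp: row_pos_def split: prod.splits)
  qed
qed (simp add: row_pos_def)

lemma row_ins_all_less: "\<forall>z\<in>set r. z < x \<Longrightarrow> row_ins r x = (r @ [x], None)"
  by (induction r) auto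

lemma sorted_wrt_list_update:
  assumes "sorted_wrt (<) r" "c < length r"
    and "\<forall>j<c. r ! j < x" "\<forall>j. c < j \<and> j < length r \<longrightarrow> x < r ! j"
  shows "sorted_wrt (<) (r[c := x])"
  using assms by (auto simp: sorted_wrt_iff_nth_less nth_list_update)

definition row_del :: "nat list \<Rightarrow> nat \<Rightarrow> nat list \<times> nat" where
  "row_del r y = (let c = row_pos r y - 1 in (r[c := y], r ! c))"

lemma row_bump:
  assumes s: "sorted_wrt (<) r" and x: "x \<notin> set r" and c: "row_pos r x < length r"
  shows "x < r ! row_pos r x" "sorted_wrt (<) (r[row_pos r x := x])"
    "row_del (r[row_pos r x := x]) (r ! row_pos r x) = (r, x)"
proof -
  let ?c = "row_pos r x" and ?y = "r ! row_pos r x"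
  have "x \<le> ?y" using row_pos_le_nth[OF s] c by simp
  moreover have "?y \<noteq> x" using x c by (metis nth_mem)
  ultimately show xy: "x < ?y" by simp
  have lo: "\<forall>j<?c. r ! j < x" using nth_less_row_pos[OF s] by blast
  have hi: "\<forall>j. ?c < j \<and> j < length r \<longrightarrow> x < r ! j"
    using s xy by (metis order.strict_trans sorted_wrt_nth_less)
  show s': "sorted_wrt (<) (r[?c := x])" using sorted_wrt_list_update[OF s c lo hi] .
  have "row_pos (r[?c := x]) ?y = Suc ?c"
  proof (rule row_pos_eqI)
    show "Suc ?c \<le> length (r[?c := x])" using c by simp
    show "\<forall>j<Suc ?c. r[?c := x] ! j < ?y" using lo xy c
      by (auto simp: nth_list_update less_Suc_eq)
    show "\<forall>j. Suc ?c \<le> j \<and> j < length (r[?c := x]) \<longrightarrow> ?y \<le> r[?c := x] ! j"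
      using s by (auto simp: sorted_wrt_iff_nth_less intro: order.strict_implies_order)
  qed
  then show "row_del (r[?c := x]) ?y = (r, x)" unfolding row_del_def using c by simp
qed

lemma row_unbump:
  assumes s: "sorted_wrt (<) r" and y: "y \<notin> set r" and pos: "0 < row_pos r y"
  defines "c \<equiv> row_pos r y - 1"
  shows "r ! c < y" "sorted_wrt (<) (r[c := y])" "row_ins (r[c := y]) (r ! c) = (r, Some y)"
proof -
  have c: "c < length r" using row_pos_le_length[of r y] pos by (simp add: c_def)
  show zy: "r ! c < y" using nth_less_row_pos[OF s, of c y] pos by (simp add: c_def)
  have lo: "\<forall>j<c. r ! j < r ! c" using s c by (simp add: sorted_wrt_iff_nth_less)
  have hi: "\<forall>j. c < j \<and> j < length r \<longrightarrow> y < r ! j"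
  proof (intro allI impI)
    fix j assume j: "c < j \<and> j < length r"
    then have "row_pos r y \<le> j" using pos unfolding c_def by linarith
    then have "y \<le> r ! j" using row_pos_le_nth[OF s] j by simp
    moreover have "r ! j \<noteq> y" using y j by (metis nth_mem)
    ultimately show "y < r ! j" by simp
  qed
  show s': "sorted_wrt (<) (r[c := y])"
    using sorted_wrt_list_update[OF s c _ hi] lo zy by (meson order.strict_trans)
  have "r ! c \<notin> set (r[c := y])"
    using set_update_distinct[of r c y] s c zy by (auto simp: strict_sorted_iff)
  moreover have "row_pos (r[c := y]) (r ! c) = c"
  proof (rule row_pos_eqI)
    show "c \<le> length (r[c := y])" using c by simp
    show "\<forall>j<c. r[c := y] ! j < r ! c" using lo by simp
    show "\<forall>j. c \<le> j \<and> j < length (r[c := y]) \<longrightarrow> r ! c \<le> r[c := y] ! j"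
    proof (intro allI impI)
      fix j assume j: "c \<le> j \<and> j < length (r[c := y])"
      show "r ! c \<le> r[c := y] ! j"
      proof (cases "j = c")
        case False
        then have "y < r ! j" using hi j by simp
        then show ?thesis using False zy by simp
      qed (use zy c in simp)
    qed
  qed
  ultimately show "row_ins (r[c := y]) (r ! c) = (r, Some y)"
    using row_ins_eq[OF s'] c by simp
qed

section \<open>Tableaux and insertion\<close>

definition first_row :: "tableau \<Rightarrow> nat list" where
  "first_row T = (case T of [] \<Rightarrow> [] | r # _ \<Rightarrow> r)"

lemma first_row_simps [simp]: "first_row [] = []" "first_row (r # rs) = r"
  by (simp_all add: first_row_def)

definition row_above :: "nat list \<Rightarrow> nat list \<Rightarrow> bool" where
  "row_above r s \<longleftrightarrow> length s \<le> length r \<and> (\<forall>j<length s. r ! j < s ! j)"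

lemma row_above_Nil [simp]: "row_above r []"
  by (simp add: row_above_def)

lemma row_above_snoc: "row_above r s \<Longrightarrow> row_above (r @ [x]) s"
  by (auto simp: row_above_def nth_append)

definition young_tableau :: "tableau \<Rightarrow> bool" where
  "young_tableau T \<longleftrightarrow> (\<forall>r\<in>set T. r \<noteq> [] \<and> sorted_wrt (<) r) \<and> successively row_above T"

lemma young_tableau_simps [simp]:
  "young_tableau []"
  "young_tableau (r # rs) \<longleftrightarrow>
     r \<noteq> [] \<and> sorted_wrt (<) r \<and> row_above r (first_row rs) \<and> young_tableau rs"
  by (simp add: young_tableau_def) (cases rs; auto simp: young_tableau_def)

lemma young_tableau_first_row_sorted: "young_tableau T \<Longrightarrow> sorted_wrt (<) (first_row T)"
  by (cases T) auto

lemma is_SYT_iff: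
  "is_SYT n T \<longleftrightarrow> young_tableau T \<and> distinct (concat T) \<and> set (concat T) = {1..n}"
proof -
  have "sorted_wrt (\<ge>) (map length T) \<and>
        (\<forall>i j. Suc i < length T \<and> j < length (T ! Suc i) \<longrightarrow> T ! i ! j < T ! Suc i ! j)
        \<longleftrightarrow> successively row_above T"
    by (auto simp: successively_conv_sorted_wrt[symmetric] successively_map successively_conv_nth
        row_above_def)
  moreover have "sum_list (map length T) = card (set (concat T))" if "distinct (concat T)"
    using that distinct_card by (metis length_concat)
  ultimately show ?thesis
    unfolding is_SYT_def is_partition_def shape_def young_tableau_def by auto
qed

definition is_corner :: "tableau \<Rightarrow> nat \<Rightarrow> bool" where
  "is_corner T i \<longleftrightarrow> i < length T \<and> length (first_row (drop (Suc i) T)) < length (T ! i)"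

lemma is_corner_simps [simp]:
  "\<not> is_corner [] i"
  "is_corner (r # rs) 0 \<longleftrightarrow> length (first_row rs) < length r"
  "is_corner (r # rs) (Suc i) \<longleftrightarrow> is_corner rs i"
  by (auto simp: is_corner_def)

lemma add_at_simps [simp]:
  "add_at [] i k = [[k]]"
  "add_at (r # rs) 0 k = (r @ [k]) # rs"
  "add_at (r # rs) (Suc i) k = r # add_at rs i k"
  by (auto simp: add_at_def)

lemma map_length_add_at:
  "map length A = map length B \<Longrightarrow> map length (add_at A i a) = map length (add_at B i b)"
proof (induction A arbitrary: B i)
  case (Cons r rs)
  then obtain q qs where "B = q # qs" "length r = length q" "map length rs = map length qs"
    by (cases B) auto
  then show ?case using Cons.IH by (cases i) auto
qed auto

lemma set_concat_add_at: "set (concat (add_at T i a)) = insert a (set (concat T))"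
proof (induction T arbitrary: i)
  case (Cons r rs) then show ?case by (cases i) auto
qed simp

lemma length_concat_add_at: "length (concat (add_at T i a)) = Suc (length (concat T))"
proof (induction T arbitrary: i)
  case (Cons r rs) then show ?case by (cases i) auto
qed simp

lemma distinct_concat_add_at:
  "distinct (concat T) \<Longrightarrow> a \<notin> set (concat T) \<Longrightarrow> distinct (concat (add_at T i a))"
proof (induction T arbitrary: i)
  case (Cons r rs)
  then show ?case
    by (cases i) (auto simp: set_concat_add_at simp del: set_concat)
qed simp

text \<open>The deleted cell is meant to be a corner, so a row of length one is the last row.\<close>

definition del_cell :: "tableau \<Rightarrow> nat \<Rightarrow> tableau" where
  "del_cell T i = (if length (T ! i) \<le> 1 then take i T else T[i := butlast (T ! i)])"

lemma del_cell_simps [simp]: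
  "del_cell (r # rs) 0 = (if length r \<le> 1 then [] else butlast r # rs)"
  "del_cell (r # rs) (Suc i) = r # del_cell rs i"
  by (simp_all add: del_cell_def)

fun uninsert :: "tableau \<Rightarrow> nat \<Rightarrow> tableau \<times> nat" where
  "uninsert [] i = ([], 0)"
| "uninsert (r # rs) 0 = (if length r \<le> 1 then rs else butlast r # rs, last r)"
| "uninsert (r # rs) (Suc i) =
     (let (rs', y) = uninsert rs i; (r', z) = row_del r y in (r' # rs', z))"

lemma row_pos_le_of_row_above:
  assumes "row_above r s" "sorted_wrt (<) s" "c < length r"
  shows "row_pos s (r ! c) \<le> c"
proof (rule ccontr)
  assume "\<not> row_pos s (r ! c) \<le> c"
  then have "s ! c < r ! c" "c < length s"
    using nth_less_row_pos[OF assms(2)] row_pos_le_length[of s "r ! c"] by auto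
  then show False using assms(1) by (auto simp: row_above_def)
qed

lemma row_above_after_bump:
  assumes rs: "row_above r s" and sr: "sorted_wrt (<) r" and c: "c < length r"
    and x: "x < r ! c" and d: "d \<le> c" "d \<le> length s"
    and len: "length s' = max (length s) (Suc d)"
    and s': "\<And>j. j < length s' \<Longrightarrow> s' ! j = (if j = d then r ! c else s ! j)"
  shows "row_above (r[c := x]) s'"
  unfolding row_above_def
proof (intro conjI allI impI)
  show "length s' \<le> length (r[c := x])" using len rs d c by (auto simp: row_above_def)
  fix j assume j: "j < length s'"
  show "r[c := x] ! j < s' ! j"
  proof (cases "j = d")
    case True
    then show ?thesis
      using s'[OF j] x d c sr by (cases "d = c") (auto simp: sorted_wrt_iff_nth_less)
  next
    case False
    then have "j < length s" using j len d(2) by auto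
    then have "r ! j < s ! j" using rs by (simp add: row_above_def)
    then show ?thesis using s'[OF j] False x c by (cases "j = c") auto
  qed
qed

lemma row_above_bump:
  assumes rs: "row_above r s" and sr: "sorted_wrt (<) r" and ss: "sorted_wrt (<) s"
    and x: "x \<notin> set r" and c: "row_pos r x < length r" and y: "r ! row_pos r x \<notin> set s"
  shows "row_above (r[row_pos r x := x]) (fst (row_ins s (r ! row_pos r x)))"
proof -
  let ?c = "row_pos r x" and ?y = "r ! row_pos r x"
  have ins: "row_ins s ?y = (if row_pos s ?y = length s then (s @ [?y], None)
      else (s[row_pos s ?y := ?y], Some (s ! row_pos s ?y)))"
    using row_ins_eq[OF ss y] .
  show ?thesis
  proof (rule row_above_after_bump[OF rs sr c row_bump(1)[OF sr x c]])
    show "row_pos s ?y \<le> ?c" using row_pos_le_of_row_above[OF rs ss c] .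
    show "row_pos s ?y \<le> length s" by (rule row_pos_le_length)
    then show "length (fst (row_ins s ?y)) = max (length s) (Suc (row_pos s ?y))"
      using ins by auto
    show "fst (row_ins s ?y) ! j = (if j = row_pos s ?y then ?y else s ! j)"
      if "j < length (fst (row_ins s ?y))" for j
      using that ins by (auto simp: nth_append)
  qed
qed

lemma young_tableau_ins:
  "young_tableau P \<Longrightarrow> distinct (concat P) \<Longrightarrow> x \<notin> set (concat P) \<Longrightarrow> ins P x = (P', i) \<Longrightarrow>
   young_tableau P' \<and> set (concat P') = insert x (set (concat P)) \<and> i \<le> length P \<and>
   map length P' = map length (add_at P i x) \<and> uninsert P' i = (P, x) \<and>
   first_row P' = fst (row_ins (first_row P) x)"
proof (induction P arbitrary: x P' i)
  case Nil
  then show ?case by auto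
next
  case (Cons r rs)
  have r: "r \<noteq> []" "sorted_wrt (<) r" "row_above r (first_row rs)" "young_tableau rs"
    using Cons.prems(1) by auto
  have xr: "x \<notin> set r" using Cons.prems(3) by simp
  show ?case
  proof (cases "row_pos r x = length r")
    case True
    then have ri: "row_ins r x = (r @ [x], None)" using row_ins_eq[OF r(2) xr] by simp
    then have P': "P' = (r @ [x]) # rs" "i = 0" using Cons.prems(4) by auto
    have "\<forall>z\<in>set r. z < x" using nth_less_row_pos[OF r(2)] True by (metis in_set_conv_nth)
    then show ?thesis using P' r ri by (simp add: sorted_wrt_append row_above_snoc)
  next
    case False
    then have c: "row_pos r x < length r" using row_pos_le_length[of r x] by simp
    define y where "y = r ! row_pos r x"
    define r' where "r' = r[row_pos r x := x]"
    obtain rs' i0 where insrs: "ins rs y = (rs', i0)" by fastforce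
    have ri: "row_ins r x = (r', Some y)" using row_ins_eq[OF r(2) xr] False r'_def y_def by simp
    then have P': "P' = r' # rs'" "i = Suc i0" using Cons.prems(4) insrs by auto
    have yr: "y \<in> set r" using c y_def by simp
    have yrs: "y \<notin> set (concat rs)" using Cons.prems(2) yr by auto
    have "distinct (concat rs)" using Cons.prems(2) by simp
    note IH = Cons.IH[OF r(4) this yrs insrs]
    have bump: "sorted_wrt (<) r'" "row_del r' y = (r, x)"
      using row_bump[OF r(2) xr c] y_def r'_def by auto
    have "y \<notin> set (first_row rs)" using yrs by (cases rs) auto
    then have "row_above r' (first_row rs')"
      using row_above_bump[OF r(3) r(2) young_tableau_first_row_sorted[OF r(4)] xr c]
        IH Cons.prems(2) y_def r'_def by simp
    moreover have "set r' = insert x (set r - {y})"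
      using set_update_distinct[OF _ c] r(2) r'_def y_def by (simp add: strict_sorted_iff)
    moreover have "map length rs' = map length (add_at rs i0 y)" using IH Cons.prems(2) by simp
    then have "map length P' = map length (add_at (r # rs) i x)"
      using P' map_length_add_at[of "add_at rs i0 y" "add_at rs i0 x"]
        map_length_add_at[of rs rs i0 y x] by (simp add: r'_def)
    ultimately show ?thesis using P' IH Cons.prems(2) bump ri yr r by auto
  qed
qed

lemma distinct_concat_ins:
  assumes "young_tableau P" "distinct (concat P)" "x \<notin> set (concat P)" "ins P x = (P', i)"
  shows "distinct (concat P')"
proof -
  have facts: "set (concat P') = insert x (set (concat P))"
    "map length P' = map length (add_at P i x)"
    using young_tableau_ins[OF assms] by auto
  have "length (concat P') = Suc (length (concat P))"
    using facts(2) length_concat_add_at[of P i x] by (simp add: length_concat)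
  also have "\<dots> = card (set (concat P'))"
    using facts(1) assms(2,3) by (simp add: distinct_card del: set_concat)
  finally show ?thesis by (simp add: card_distinct)
qed

definition bumped_out :: "nat list \<Rightarrow> nat list \<Rightarrow> nat \<Rightarrow> bool" where
  "bumped_out s s0 y \<longleftrightarrow> (s \<noteq> [] \<and> s0 = butlast s \<and> y = last s) \<or>
     (\<exists>e y'. e < length s \<and> y = s ! e \<and> s0 = s[e := y'] \<and> y < y')"

lemma bumped_outE:
  assumes "bumped_out s s0 y"
  obtains e where "e < length s" "y = s ! e" "length s0 \<le> length s"
    "\<And>j. j < length s0 \<Longrightarrow> s ! j \<le> s0 ! j" "e < length s0 \<Longrightarrow> y < s0 ! e"
  using assms unfolding bumped_out_def
proof (elim disjE exE conjE)
  assume "s \<noteq> []" "s0 = butlast s" "y = last s"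
  then show thesis
    by (intro that[of "length s - 1"]) (auto simp: last_conv_nth nth_butlast)
next
  fix e y' assume "e < length s" "y = s ! e" "s0 = s[e := y']" "y < y'"
  then show thesis by (intro that[of e]) (auto simp: nth_list_update)
qed

lemma row_above_after_unbump:
  assumes rs: "row_above r s" and ss: "sorted_wrt (<) s" and e: "e < length s" "e \<le> c"
    and c: "c < length r" and len: "length s0 \<le> length s"
    and ge: "\<And>j. j < length s0 \<Longrightarrow> s ! j \<le> s0 ! j" and gt: "e < length s0 \<Longrightarrow> s ! e < s0 ! e"
  shows "row_above (r[c := s ! e]) s0"
  unfolding row_above_def
proof (intro conjI allI impI)
  show "length s0 \<le> length (r[c := s ! e])" using len rs by (simp add: row_above_def)
  fix j assume j: "j < length s0"
  have "r ! j < s ! j" using rs j len by (simp add: row_above_def)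
  show "r[c := s ! e] ! j < s0 ! j"
  proof (cases "j = c")
    case True
    have "s ! e < s0 ! j"
    proof (cases "e = c")
      case True then show ?thesis using gt j \<open>j = c\<close> by simp
    next
      case False
      then have "s ! e < s ! j" using ss e j len \<open>j = c\<close> by (simp add: sorted_wrt_iff_nth_less)
      then show ?thesis using ge[OF j] by simp
    qed
    then show ?thesis using True c by simp
  next
    case False then show ?thesis using \<open>r ! j < s ! j\<close> ge[OF j] by simp
  qed
qed

lemma row_above_unbump:
  assumes rs: "row_above r s" and sr: "sorted_wrt (<) r" and ss: "sorted_wrt (<) s"
    and b: "bumped_out s s0 y"
  shows "0 < row_pos r y" "row_above (r[row_pos r y - 1 := y]) s0"
proof -
  obtain e where e: "e < length s" "y = s ! e" "length s0 \<le> length s"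
    "\<And>j. j < length s0 \<Longrightarrow> s ! j \<le> s0 ! j" "e < length s0 \<Longrightarrow> y < s0 ! e"
    using bumped_outE[OF b] by blast
  have "e < length r" "r ! e < y" using rs e(1,2) by (auto simp: row_above_def)
  then have pos: "e < row_pos r y" using row_pos_le_nth[OF sr, of y e] by (meson leD not_le)
  then show "0 < row_pos r y" by simp
  have "row_pos r y - 1 < length r" using pos row_pos_le_length[of r y] by simp
  then show "row_above (r[row_pos r y - 1 := y]) s0"
    using row_above_after_unbump[OF rs ss e(1) _ _ e(3)] e(2,4,5) pos by simp
qed

lemma uninsert_first_row:
  assumes T: "young_tableau (s # rest)" "distinct (concat (s # rest))"
    and cor: "length (first_row rest) < length s" and u: "uninsert (s # rest) 0 = (P, x)"
  shows "young_tableau P \<and> distinct (concat P) \<and> set (concat (s # rest)) = insert x (set (concat P)) \<and>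
    x \<notin> set (concat P) \<and> ins P x = (s # rest, 0) \<and>
    map length P = map length (del_cell (s # rest) 0) \<and> bumped_out s (first_row P) x"
proof -
  have s: "s \<noteq> []" "sorted_wrt (<) s" "row_above s (first_row rest)" "young_tableau rest"
    using T(1) by auto
  show ?thesis
  proof (cases "length s \<le> 1")
    case True
    then obtain a where "s = [a]" using s(1) by (cases s) auto
    moreover have "length (first_row rest) = 0" using cor True by linarith
    then have "rest = []" using s(4) by (cases rest) auto
    ultimately show ?thesis using u by (auto simp: bumped_out_def)
  next
    case False
    define b where "b = butlast s"
    have P: "P = b # rest" "x = last s" using u False b_def by auto
    have sb: "s = b @ [x]" using P s(1) b_def by simp
    have "sorted_wrt (<) b" "\<forall>z\<in>set b. z < x"
      using s(2) unfolding sb by (simp_all add: sorted_wrt_append)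
    moreover have "row_above b (first_row rest)"
      using s(3) cor unfolding b_def by (auto simp: row_above_def nth_butlast)
    moreover have "b \<noteq> []" using False sb by auto
    moreover have "distinct (b @ x # concat rest)" using T(2) unfolding sb by simp
    ultimately show ?thesis
      using P s(1,4) False row_ins_all_less unfolding sb by (auto simp: bumped_out_def)
  qed
qed

lemma young_tableau_uninsert:
  "young_tableau P' \<Longrightarrow> distinct (concat P') \<Longrightarrow> is_corner P' i \<Longrightarrow> uninsert P' i = (P, x) \<Longrightarrow>
   young_tableau P \<and> distinct (concat P) \<and> set (concat P') = insert x (set (concat P)) \<and>
   x \<notin> set (concat P) \<and> ins P x = (P', i) \<and> map length P = map length (del_cell P' i) \<and>
   bumped_out (first_row P') (first_row P) x"
proof (induction P' arbitrary: i P x)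
  case (Cons s rest)
  have s: "s \<noteq> []" "sorted_wrt (<) s" "row_above s (first_row rest)" "young_tableau rest"
    using Cons.prems(1) by auto
  show ?case
  proof (cases i)
    case 0
    then show ?thesis using uninsert_first_row[OF Cons.prems(1,2)] Cons.prems(3,4) by simp
  next
    case (Suc i0)
    obtain rest0 y where urest: "uninsert rest i0 = (rest0, y)" by fastforce
    have "distinct (concat rest)" "is_corner rest i0" using Cons.prems(2,3) Suc by simp_all
    note IH = Cons.IH[OF s(4) this urest]
    have ys: "y \<notin> set s" using IH Cons.prems(2) by auto
    have ab: "0 < row_pos s y" "row_above (s[row_pos s y - 1 := y]) (first_row rest0)"
      using row_above_unbump[OF s(3) s(2) young_tableau_first_row_sorted[OF s(4)]]
        IH Cons.prems(2) by auto
    define c where "c = row_pos s y - 1"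
    define s0 where "s0 = s[c := y]"
    have P: "P = s0 # rest0" "x = s ! c"
      using Cons.prems(4) Suc urest by (simp_all add: row_del_def c_def s0_def Let_def)
    have ub: "s ! c < y" "sorted_wrt (<) s0" "row_ins s0 (s ! c) = (s, Some y)"
      using row_unbump[OF s(2) ys ab(1)] by (simp_all add: c_def s0_def)
    have c: "c < length s" using ab(1) row_pos_le_length[of s y] c_def by simp
    have ss0: "set s0 = insert y (set s - {x})"
      using set_update_distinct[OF _ c] s(2) P s0_def by (simp add: strict_sorted_iff)
    have xs: "x \<in> set s" "x \<noteq> y" using c P ub(1) by auto
    have "young_tableau P" using P ab(2) ub(2) IH s(1) s0_def c_def by simp
    moreover have "set s \<inter> set (concat rest) = {}" using Cons.prems(2) by simp
    then have "distinct (concat P) \<and> set (concat (s # rest)) = insert x (set (concat P)) \<and>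
        x \<notin> set (concat P)"
      using P IH Cons.prems(2) ss0 xs ub(2) by (auto simp: strict_sorted_iff)
    moreover have "ins P x = (s # rest, i)" using P ub(3) IH Suc by simp
    moreover have "map length P = map length (del_cell (s # rest) i)"
      using P IH Suc s0_def by simp
    moreover have "bumped_out s s0 x"
      unfolding bumped_out_def using c P ub(1) s0_def by blast
    ultimately show ?thesis using P by simp
  qed
qed simp

section \<open>The recording tableau\<close>

lemma le_last_if_sorted: "sorted_wrt (<) (r::nat list) \<Longrightarrow> a \<in> set r \<Longrightarrow> a \<le> last r"
proof (induction r)
  case (Cons y ys)
  then show ?case by (cases "ys = []") (auto intro: less_imp_le dest: bspec[OF _ last_in_set])
qed simp

lemma row_above_butlast: "row_above r s \<Longrightarrow> row_above r (butlast s)"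
  by (auto simp: row_above_def nth_butlast)

lemma row_above_snoc_below:
  "row_above r s \<Longrightarrow> length s < length r \<Longrightarrow> \<forall>z\<in>set r. z < k \<Longrightarrow> row_above r (s @ [k])"
  by (auto simp: row_above_def nth_append less_Suc_eq)

lemma first_row_add_at: "first_row (add_at T i k) = first_row T \<or> first_row (add_at T i k) = first_row T @ [k]"
  by (cases T; cases i) auto

lemma length_first_row_cong: "map length A = map length B \<Longrightarrow> length (first_row A) = length (first_row B)"
  by (cases A; cases B) auto

lemma young_tableau_add_at:
  "young_tableau Q \<Longrightarrow> \<forall>z\<in>set (concat Q). z < k \<Longrightarrow> young_tableau T \<Longrightarrow>
   map length T = map length (add_at Q i k) \<Longrightarrow> young_tableau (add_at Q i k)"
proof (induction Q arbitrary: i T)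
  case (Cons q qs)
  have q: "q \<noteq> []" "sorted_wrt (<) q" "row_above q (first_row qs)" "young_tableau qs"
    using Cons.prems(1) by auto
  have qk: "\<forall>z\<in>set q. z < k" "\<forall>z\<in>set (concat qs). z < k" using Cons.prems(2) by auto
  show ?case
  proof (cases i)
    case 0 then show ?thesis using q qk by (simp add: sorted_wrt_append row_above_snoc)
  next
    case (Suc i0)
    obtain t ts where T: "T = t # ts" using Cons.prems(4) Suc by (cases T) auto
    have lt: "length t = length q" "map length ts = map length (add_at qs i0 k)"
      using Cons.prems(4) Suc T by auto
    have t: "young_tableau ts" "row_above t (first_row ts)" using Cons.prems(3) T by auto
    have len: "length (first_row (add_at qs i0 k)) \<le> length q"
      using length_first_row_cong[OF lt(2)] t(2) lt(1) by (simp add: row_above_def)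
    have "row_above q (first_row (add_at qs i0 k))"
    proof (cases "first_row (add_at qs i0 k) = first_row qs")
      case False
      then have "first_row (add_at qs i0 k) = first_row qs @ [k]" using first_row_add_at by metis
      then show ?thesis using row_above_snoc_below[OF q(3) _ qk(1)] len by simp
    qed (use q(3) in simp)
    then show ?thesis using Suc q Cons.IH[OF q(4) qk(2) t(1) lt(2)] by simp
  qed
qed simp

lemma row_above_shorter:
  assumes "row_above r s" "r \<noteq> []" "\<forall>z\<in>set s. z \<le> last r"
  shows "length s < length r"
proof (rule ccontr)
  assume "\<not> length s < length r"
  then have eq: "length s = length r" using assms(1) by (simp add: row_above_def)
  let ?j = "length r - 1"
  have "r ! ?j < s ! ?j" using assms(1,2) eq by (simp add: row_above_def)
  moreover have "r ! ?j = last r" using assms(2) by (simp add: last_conv_nth)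
  moreover have "s ! ?j \<le> last r"
    using assms(2,3) eq by (metis diff_less length_greater_0_conv nth_mem zero_less_one)
  ultimately show False by simp
qed

lemma del_cell_max:
  "young_tableau Q \<Longrightarrow> distinct (concat Q) \<Longrightarrow> \<forall>z\<in>set (concat Q). z \<le> M \<Longrightarrow>
   i < length Q \<Longrightarrow> M \<in> set (Q ! i) \<Longrightarrow>
   is_corner Q i \<and> young_tableau (del_cell Q i) \<and> distinct (concat (del_cell Q i)) \<and>
   set (concat (del_cell Q i)) = set (concat Q) - {M} \<and> add_at (del_cell Q i) i M = Q"
proof (induction Q arbitrary: i)
  case (Cons r rs)
  have r: "r \<noteq> []" "sorted_wrt (<) r" "row_above r (first_row rs)" "young_tableau rs"
    using Cons.prems(1) by auto
  show ?case
  proof (cases i)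
    case 0
    then have "M \<in> set r" using Cons.prems(5) by simp
    then have lM: "last r = M"
      using le_last_if_sorted[OF r(2)] Cons.prems(3) r(1) by (simp add: le_antisym)
    then obtain b where rb: "r = b @ [M]" using r(1) by (metis append_butlast_last_id)
    have "\<forall>z\<in>set (first_row rs). z \<le> last r" using Cons.prems(3) lM by (cases rs) auto
    then have cor: "length (first_row rs) < length r" using row_above_shorter[OF r(3,1)] by simp
    show ?thesis
    proof (cases "length r \<le> 1")
      case True
      then have "length (first_row rs) = 0" using cor by linarith
      then have "rs = []" using r(4) by (cases rs) auto
      then show ?thesis using 0 rb True by (cases b) auto
    next
      case False
      have "sorted_wrt (<) b" using r(2) rb by (simp add: sorted_wrt_append)
      moreover have "row_above b (first_row rs)"
        using r(3) cor rb by (auto simp: row_above_def nth_append)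
      moreover have "distinct (b @ M # concat rs)" using Cons.prems(2) rb by simp
      ultimately show ?thesis using 0 False r(4) rb cor by auto
    qed
  next
    case (Suc i0)
    have M: "i0 < length rs" "M \<in> set (rs ! i0)" using Cons.prems(4,5) Suc by auto
    then have "M \<in> set (concat rs)" by auto
    then have "M \<notin> set r" using Cons.prems(2) by auto
    have "distinct (concat rs)" "\<forall>z\<in>set (concat rs). z \<le> M" using Cons.prems(2,3) by auto
    note IH = Cons.IH[OF r(4) this M]
    have "first_row (del_cell rs i0) = first_row rs \<or> first_row (del_cell rs i0) = butlast (first_row rs) \<or>
        first_row (del_cell rs i0) = []"
      by (cases rs; cases i0) (auto simp: del_cell_def)
    then have "row_above r (first_row (del_cell rs i0))" using r(3) row_above_butlast by auto
    moreover have "set r \<inter> set (concat rs) = {}" "distinct r" using Cons.prems(2) by auto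
    ultimately show ?thesis using Suc r IH \<open>M \<notin> set r\<close> by auto
  qed
qed simp

lemma del_cell_add_at: "young_tableau T \<Longrightarrow> i \<le> length T \<Longrightarrow> del_cell (add_at T i a) i = T"
proof (induction T arbitrary: i)
  case (Cons r rs) then show ?case by (cases i) auto
qed (simp add: del_cell_def)

lemma map_length_del_cell:
  "map length A = map length B \<Longrightarrow> map length (del_cell A i) = map length (del_cell B i)"
proof (induction A arbitrary: B i)
  case (Cons a as)
  then obtain b bs where "B = b # bs" "length a = length b" "map length as = map length bs"
    by (cases B) auto
  then show ?case using Cons.IH by (cases i) auto
qed (simp add: del_cell_def)

lemma is_corner_cong: "map length A = map length B \<Longrightarrow> is_corner A i = is_corner B i"
proof (induction A arbitrary: B i)
  case (Cons a as)
  then obtain b bs where B: "B = b # bs" "length a = length b" "map length as = map length bs"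
    by (cases B) auto
  then show ?case using Cons.IH length_first_row_cong[OF B(3)] by (cases i) auto
qed simp

section \<open>The Robinson-Schensted correspondence and its inverse\<close>

lemma rs_go_snoc:
  "rs_go (xs @ [x]) PQ k =
     (let (P, Q) = rs_go xs PQ k; (P', i) = ins P x in (P', add_at Q i (k + length xs)))"
proof (induction xs arbitrary: PQ k)
  case Nil then show ?case by (cases PQ) (simp split: prod.splits)
next
  case (Cons y ys)
  obtain P Q where PQ: "PQ = (P, Q)" by fastforce
  obtain P1 i1 where "ins P y = (P1, i1)" by fastforce
  then show ?case using Cons.IH[of "(P1, add_at Q i1 k)" "Suc k"] PQ by simp
qed

lemma RS_Nil: "RS [] = ([], [])"
  by (simp add: RS_def)

lemma RS_snoc:
  "RS (xs @ [x]) = (let (P, Q) = RS xs; (P', i) = ins P x in (P', add_at Q i (Suc (length xs))))"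
  unfolding RS_def rs_go_snoc by simp

definition row_of :: "tableau \<Rightarrow> nat \<Rightarrow> nat" where
  "row_of T a = (LEAST i. i < length T \<and> a \<in> set (T ! i))"

lemma distinct_concat_row_unique:
  "distinct (concat T) \<Longrightarrow> i < length T \<Longrightarrow> j < length T \<Longrightarrow>
   a \<in> set (T ! i) \<Longrightarrow> a \<in> set (T ! j) \<Longrightarrow> i = j"
proof (induction T arbitrary: i j)
  case (Cons r rs)
  show ?case
  proof (cases i; cases j)
    fix i' j' assume "i = Suc i'" "j = Suc j'"
    then show ?thesis using Cons by auto
  next
    fix j' assume "i = 0" "j = Suc j'"
    then show ?thesis using Cons.prems by (auto dest!: nth_mem)
  next
    fix i' assume "i = Suc i'" "j = 0"
    then show ?thesis using Cons.prems by (auto dest!: nth_mem)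
  qed simp
qed simp

lemma row_of_eq: "distinct (concat T) \<Longrightarrow> i < length T \<Longrightarrow> a \<in> set (T ! i) \<Longrightarrow> row_of T a = i"
  unfolding row_of_def by (rule Least_equality) (auto dest: distinct_concat_row_unique)

lemma row_of_in:
  assumes "a \<in> set (concat T)"
  shows "row_of T a < length T \<and> a \<in> set (T ! row_of T a)"
proof -
  obtain r where "r \<in> set T" "a \<in> set r" using assms by auto
  then obtain i where "i < length T" "a \<in> set (T ! i)" by (metis in_set_conv_nth)
  then have "\<exists>i. i < length T \<and> a \<in> set (T ! i)" by blast
  then show ?thesis unfolding row_of_def by (rule LeastI_ex)
qed

text \<open>The largest entry of the recording tableau marks the cell created last.\<close>

fun RS_inv :: "nat \<Rightarrow> tableau \<Rightarrow> tableau \<Rightarrow> nat list" where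
  "RS_inv 0 P Q = []"
| "RS_inv (Suc m) P Q =
     (let i = row_of Q (Suc m); (P0, x) = uninsert P i in RS_inv m P0 (del_cell Q i) @ [x])"

lemma length_RS_inv: "length (RS_inv m P Q) = m"
  by (induction m arbitrary: P Q) (auto simp: Let_def split: prod.splits)

lemma RS_tableaux:
  "distinct w \<Longrightarrow> RS w = (P, Q) \<Longrightarrow>
   young_tableau P \<and> distinct (concat P) \<and> set (concat P) = set w \<and>
   young_tableau Q \<and> distinct (concat Q) \<and> set (concat Q) = {1..length w} \<and>
   map length P = map length Q \<and> RS_inv (length w) P Q = w"
proof (induction w arbitrary: P Q rule: rev_induct)
  case Nil then show ?case by (simp add: RS_Nil)
next
  case (snoc x xs)
  have dxs: "distinct xs" "x \<notin> set xs" using snoc.prems(1) by auto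
  obtain P0 Q0 where R0: "RS xs = (P0, Q0)" by fastforce
  obtain P1 i where I: "ins P0 x = (P1, i)" by fastforce
  define k where "k = Suc (length xs)"
  have PQ: "P = P1" "Q = add_at Q0 i k" using snoc.prems(2) R0 I by (simp_all add: RS_snoc k_def)
  note IH = snoc.IH[OF dxs(1) R0]
  have xP0: "x \<notin> set (concat P0)" using IH dxs by simp
  have ins: "young_tableau P1" "set (concat P1) = insert x (set (concat P0))" "i \<le> length P0"
    "map length P1 = map length (add_at P0 i x)" "uninsert P1 i = (P0, x)"
    using young_tableau_ins[OF _ _ xP0 I] IH by auto
  have dP: "distinct (concat P1)" using distinct_concat_ins[OF _ _ xP0 I] IH by simp
  have shape: "map length P1 = map length (add_at Q0 i k)"
    using ins(4) map_length_add_at[of P0 Q0 i x k] IH by simp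
  have kQ0: "\<forall>z\<in>set (concat Q0). z < k" "k \<notin> set (concat Q0)" using IH by (auto simp: k_def)
  have tQ: "young_tableau Q" using young_tableau_add_at[OF _ kQ0(1) ins(1) shape] IH PQ by simp
  have dQ: "distinct (concat Q)" using PQ distinct_concat_add_at[OF _ kQ0(2)] IH by simp
  have lQ0: "length Q0 = length P0" using IH by (metis length_map)
  have "i < length Q" "k \<in> set (Q ! i)" using ins(3) lQ0 PQ by (auto simp: add_at_def nth_append)
  then have "row_of Q k = i" by (rule row_of_eq[OF dQ])
  moreover have "del_cell Q i = Q0" using PQ del_cell_add_at[of Q0 i] IH ins(3) lQ0 by simp
  ultimately have "RS_inv (length (xs @ [x])) P Q = xs @ [x]" using ins(5) PQ IH by (simp add: k_def)
  moreover have "set (concat Q) = {1..length (xs @ [x])}"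
    using PQ IH set_concat_add_at[of Q0 i k] by (simp add: k_def atLeastAtMostSuc_conv)
  ultimately show ?case using PQ ins(1,2) dP tQ dQ shape IH by simp
qed

lemma RS_RS_inv:
  "young_tableau P \<Longrightarrow> distinct (concat P) \<Longrightarrow> young_tableau Q \<Longrightarrow> distinct (concat Q) \<Longrightarrow>
   set (concat Q) = {1..m} \<Longrightarrow> map length P = map length Q \<Longrightarrow>
   distinct (RS_inv m P Q) \<and> set (RS_inv m P Q) = set (concat P) \<and> RS (RS_inv m P Q) = (P, Q)"
proof (induction m arbitrary: P Q)
  case 0
  then have "Q = []" by (cases Q) auto
  then show ?case using 0 by (simp add: RS_Nil)
next
  case (Suc m)
  define i where "i = row_of Q (Suc m)"
  have "Suc m \<in> set (concat Q)" using Suc.prems(5) by simp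
  then have i: "i < length Q" "Suc m \<in> set (Q ! i)" using row_of_in i_def by auto
  have le: "\<forall>z\<in>set (concat Q). z \<le> Suc m" using Suc.prems(5) by simp
  define Q0 where "Q0 = del_cell Q i"
  have Q0: "is_corner Q i" "young_tableau Q0" "distinct (concat Q0)" "set (concat Q0) = {1..m}"
    "add_at Q0 i (Suc m) = Q"
    using del_cell_max[OF Suc.prems(3,4) le i] Suc.prems(5) unfolding Q0_def by auto
  obtain P0 x where u: "uninsert P i = (P0, x)" by fastforce
  have "is_corner P i" using is_corner_cong[OF Suc.prems(6)] Q0(1) by simp
  note U = young_tableau_uninsert[OF Suc.prems(1,2) this u]
  have "map length P0 = map length Q0"
    using U map_length_del_cell[OF Suc.prems(6)] Q0_def by simp
  then have IH: "distinct (RS_inv m P0 Q0) \<and> set (RS_inv m P0 Q0) = set (concat P0) \<and>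
      RS (RS_inv m P0 Q0) = (P0, Q0)"
    using Suc.IH U Q0 by simp
  have "RS (RS_inv m P0 Q0) = (P0, Q0)" "ins P0 x = (P, i)" "add_at Q0 i (Suc m) = Q"
    using IH U Q0 by simp_all
  then have "RS (RS_inv m P0 Q0 @ [x]) = (P, Q)"
    using length_RS_inv[of m P0 Q0] by (simp add: RS_snoc)
  moreover have "RS_inv (Suc m) P Q = RS_inv m P0 Q0 @ [x]"
    using u i_def Q0_def by (simp add: Let_def)
  moreover have "distinct (RS_inv m P0 Q0 @ [x])" "set (RS_inv m P0 Q0 @ [x]) = set (concat P)"
    using IH U by auto
  ultimately show ?case by simp
qed

section \<open>Knuth classes\<close>

lemma perms_length: "w \<in> perms n \<Longrightarrow> length w = n"
  unfolding perms_def by (metis (mono_tags, lifting) card_atLeastAtMost diff_Suc_1 distinct_card mem_Collect_eq)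

lemma finite_perms: "finite (perms n)"
proof -
  have "perms n \<subseteq> {xs. set xs \<subseteq> {1..n} \<and> length xs \<le> n}"
    using perms_length unfolding perms_def by auto
  then show ?thesis using finite_lists_length_le[of "{1..n}" n] finite_subset by auto
qed

lemma mem_knuth_class_iff: "w \<in> knuth_class n P \<longleftrightarrow> w \<in> perms n \<and> fst (RS w) = P"
  unfolding knuth_class_def by (auto intro: prod.collapse[symmetric])

lemma recording_tableau_knuth_class:
  assumes "w \<in> knuth_class n P"
  shows "is_SYT n (snd (RS w)) \<and> shape (snd (RS w)) = shape P \<and> RS_inv n P (snd (RS w)) = w"
proof -
  have w: "w \<in> perms n" "fst (RS w) = P" using assms by (simp_all add: mem_knuth_class_iff)
  then have "distinct w" "set w = {1..n}" "length w = n" using perms_length by (auto simp: perms_def)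
  moreover have "RS w = (P, snd (RS w))" using w(2) by (metis prod.collapse)
  ultimately show ?thesis using RS_tableaux[of w P "snd (RS w)"] by (simp add: is_SYT_iff shape_def)
qed

lemma knuth_class_bij:
  assumes P: "is_SYT n P"
  shows "bij_betw (\<lambda>w. snd (RS w)) (knuth_class n P) {Q. is_SYT n Q \<and> shape Q = shape P}"
proof (rule bij_betw_byWitness[where f' = "RS_inv n P"])
  show "\<forall>w\<in>knuth_class n P. RS_inv n P (snd (RS w)) = w"
    and "(\<lambda>w. snd (RS w)) ` knuth_class n P \<subseteq> {Q. is_SYT n Q \<and> shape Q = shape P}"
    using recording_tableau_knuth_class by auto
  have "distinct (RS_inv n P Q) \<and> set (RS_inv n P Q) = set (concat P) \<and> RS (RS_inv n P Q) = (P, Q)"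
    if "is_SYT n Q" "shape Q = shape P" for Q
    using that P by (intro RS_RS_inv) (simp_all add: is_SYT_iff shape_def)
  then show "\<forall>Q\<in>{Q. is_SYT n Q \<and> shape Q = shape P}. snd (RS (RS_inv n P Q)) = Q"
    and "RS_inv n P ` {Q. is_SYT n Q \<and> shape Q = shape P} \<subseteq> knuth_class n P"
    using P by (auto simp: mem_knuth_class_iff perms_def is_SYT_iff)
qed

lemma finite_knuth_class: "finite (knuth_class n P)"
  using finite_perms by (rule finite_subset[rotated]) (auto simp: knuth_class_def)

lemma card_knuth_class:
  assumes "is_SYT n P"
  shows "card (knuth_class n P) = flam (shape P)"
proof -
  have "sum_list (shape P) = n" using assms by (simp add: is_SYT_def is_partition_def)
  then show ?thesis using bij_betw_same_card[OF knuth_class_bij[OF assms]] by (simp add: flam_def)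
qed

lemma finite_SYT: "finite {P. is_SYT n P}"
proof -
  have "{P. is_SYT n P} \<subseteq> (\<lambda>w. fst (RS w)) ` perms n"
  proof
    fix P assume "P \<in> {P. is_SYT n P}"
    then have P: "young_tableau P" "distinct (concat P)" "set (concat P) = {1..n}"
      by (simp_all add: is_SYT_iff)
    then have "distinct (RS_inv n P P) \<and> set (RS_inv n P P) = set (concat P) \<and>
        RS (RS_inv n P P) = (P, P)"
      by (intro RS_RS_inv) simp_all
    then have "RS_inv n P P \<in> perms n" "P = fst (RS (RS_inv n P P))"
      using P(3) by (simp_all add: perms_def)
    then show "P \<in> (\<lambda>w. fst (RS w)) ` perms n" by (rule rev_image_eqI)
  qed
  then show ?thesis using finite_perms finite_subset by blast
qed

lemma card_UN_knuth_class:
  assumes "\<forall>P\<in>\<P>. is_SYT n P"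
  shows "card (\<Union>P\<in>\<P>. knuth_class n P) = (\<Sum>P\<in>\<P>. flam (shape P))"
proof -
  have "\<P> \<subseteq> {P. is_SYT n P}" using assms by blast
  then have "finite \<P>" using finite_SYT by (rule finite_subset)
  then have "card (\<Union>P\<in>\<P>. knuth_class n P) = (\<Sum>P\<in>\<P>. card (knuth_class n P))"
    by (intro card_UN_disjoint) (auto simp: finite_knuth_class mem_knuth_class_iff)
  also have "\<dots> = (\<Sum>P\<in>\<P>. flam (shape P))" using assms card_knuth_class by simp
  finally show ?thesis .
qed

section \<open>The classes of the identity and the reversal\<close>

lemma rs_go_row: "sorted_wrt (<) (r @ xs) \<Longrightarrow> fst (rs_go xs ([r], [q]) k) = [r @ xs]"
proof (induction xs arbitrary: r q k)
  case (Cons y ys)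
  have "\<forall>z\<in>set r. z < y" using Cons.prems by (simp add: sorted_wrt_append)
  then have "rs_go (y # ys) ([r], [q]) k = rs_go ys ([r @ [y]], [q @ [k]]) (Suc k)"
    by (simp add: row_ins_all_less)
  then show ?case using Cons.IH[of "r @ [y]"] Cons.prems by simp
qed simp

lemma RS_iota: "0 < n \<Longrightarrow> fst (RS (iota n)) = [[1..<Suc n]]"
proof -
  assume "0 < n"
  then have e: "[1..<Suc n] = 1 # [2..<Suc n]"
    using upt_conv_Cons[of 1 "Suc n"] by (simp del: upt_Suc add: numeral_2_eq_2)
  have "RS (iota n) = rs_go [2..<Suc n] ([[1]], [[1]]) 2"
    unfolding RS_def iota_def e by (simp del: upt_Suc add: numeral_2_eq_2)
  moreover have "fst (rs_go [2..<Suc n] ([[1]], [[1]]) 2) = [[1] @ [2..<Suc n]]"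
    by (rule rs_go_row) (simp del: upt_Suc)
  ultimately show ?thesis using e by simp
qed

lemma ins_column:
  "sorted_wrt (<) (x # as) \<Longrightarrow> fst (ins (map (\<lambda>a. [a]) as) x) = map (\<lambda>a. [a]) (x # as)"
proof (induction as arbitrary: x)
  case (Cons a as)
  have "x < a" "sorted_wrt (<) (a # as)" using Cons.prems by auto
  then show ?case using Cons.IH[of a] by (auto split: prod.splits)
qed simp

lemma rs_go_column:
  "sorted_wrt (<) (rev xs @ as) \<Longrightarrow>
   fst (rs_go xs (map (\<lambda>a. [a]) as, Q) k) = map (\<lambda>a. [a]) (rev xs @ as)"
proof (induction xs arbitrary: as Q k)
  case (Cons y ys)
  obtain P' i where I: "ins (map (\<lambda>a. [a]) as) y = (P', i)" by fastforce
  have "sorted_wrt (<) (y # as)" using Cons.prems by (simp add: sorted_wrt_append)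
  then have "P' = map (\<lambda>a. [a]) (y # as)" using ins_column I by (metis fst_conv)
  then show ?case using Cons.IH[of "y # as"] Cons.prems I by simp
qed simp

lemma RS_delta: "fst (RS (delta n)) = map (\<lambda>a. [a]) [1..<Suc n]"
  using rs_go_column[of "rev [1..<Suc n]" "[]" "[]" 1]
  unfolding RS_def delta_def by (simp del: upt_Suc)

lemma sorted_eq_upt:
  assumes "sorted_wrt (<) r" "set r = {1..n}"
  shows "r = [1..<Suc n]"
proof (rule sorted_distinct_set_unique)
  show "sorted r" "distinct r" using assms(1) by (simp_all add: strict_sorted_iff)
  show "sorted [1..<Suc n]" "distinct [1..<Suc n]" by (simp_all del: upt_Suc)
  show "set r = set [1..<Suc n]"
    using assms(2) by (simp del: upt_Suc add: atLeastLessThanSuc_atLeastAtMost)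
qed

lemma SYT_single_row:
  assumes "is_SYT n T" "shape T = [n]"
  shows "T = [[1..<Suc n]]"
proof -
  obtain r where T: "T = [r]" using assms(2) unfolding shape_def by (cases T) auto
  then have "sorted_wrt (<) r" "set r = {1..n}" using assms(1) by (simp_all add: is_SYT_iff)
  then show ?thesis using T sorted_eq_upt by simp
qed

lemma SYT_single_column:
  assumes "is_SYT n T" "shape T = replicate n 1"
  shows "T = map (\<lambda>a. [a]) [1..<Suc n]"
proof -
  define h where "h = map hd T"
  have "length r = 1" if "r \<in> set T" for r
    using that assms(2) by (metis in_set_replicate list.set_map imageI shape_def)
  then have T: "T = map (\<lambda>a. [a]) h"
    unfolding h_def by (induction T) (simp_all add: length_Suc_conv, metis list.sel(1))
  have "successively row_above T" using assms(1) by (simp add: is_SYT_iff young_tableau_def)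
  then have "sorted_wrt (<) h"
    unfolding T by (simp add: successively_map row_above_def successively_conv_sorted_wrt)
  moreover have "set h = {1..n}" using assms(1) T by (simp add: is_SYT_iff)
  ultimately show ?thesis using T sorted_eq_upt by simp
qed

lemma shape_singletons: "shape (map (\<lambda>a. [a]) xs) = replicate (length xs) 1"
  by (induction xs) (auto simp: shape_def)

lemma iota_or_delta_in_knuth_class_iff:
  assumes P: "is_SYT n P"
  shows "iota n \<in> knuth_class n P \<or> delta n \<in> knuth_class n P \<longleftrightarrow>
         shape P = [n] \<or> shape P = replicate n 1"
proof -
  have "iota n \<in> perms n" "delta n \<in> perms n" by (auto simp: iota_def delta_def perms_def)
  then have mem: "iota n \<in> knuth_class n P \<longleftrightarrow> fst (RS (iota n)) = P"
    "delta n \<in> knuth_class n P \<longleftrightarrow> fst (RS (delta n)) = P"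
    by (simp_all add: mem_knuth_class_iff)
  have column: "delta n \<in> knuth_class n P \<longleftrightarrow> shape P = replicate n 1"
    unfolding mem(2) RS_delta using SYT_single_column[OF P] shape_singletons[of "[1..<Suc n]"]
    by auto
  show ?thesis
  proof (cases "n = 0")
    case True
    then show ?thesis using column P by (auto simp: iota_def delta_def is_SYT_def is_partition_def)
  next
    case False
    then have "iota n \<in> knuth_class n P \<longleftrightarrow> shape P = [n]"
      using mem(1) RS_iota SYT_single_row[OF P] by (auto simp: shape_def)
    then show ?thesis using column by blast
  qed
qed

section \<open>Counting\<close>

lemma finite_partitions: "finite {lam. is_partition n lam}"
proof -
  have len: "length lam \<le> sum_list lam" if "0 \<notin> set lam" for lam :: "nat list"
    using that by (induction lam) auto
  have "{lam. is_partition n lam} \<subseteq> {xs. set xs \<subseteq> {0..n} \<and> length xs \<le> n}"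
    using len member_le_sum_list by (fastforce simp: is_partition_def)
  then show ?thesis using finite_lists_length_le[of "{0..n}" n] finite_subset by auto
qed

lemma sumset_over_cong: "(\<And>i. i \<in> I \<Longrightarrow> A i = B i) \<Longrightarrow> sumset_over I A = sumset_over I B"
  unfolding sumset_over_def by auto

lemma sum_comp_eq_sum_card_fibres:
  fixes c :: "'i \<Rightarrow> nat"
  assumes "finite X" "finite I" "g ` X \<subseteq> I"
  shows "(\<Sum>y\<in>X. c (g y)) = (\<Sum>i\<in>I. c i * card {y\<in>X. g y = i})"
proof -
  have "(\<Sum>y\<in>X. c (g y)) = (\<Sum>i\<in>I. \<Sum>y\<in>{y\<in>X. g y = i}. c (g y))"
    using sum.group[OF assms, of "\<lambda>y. c (g y)"] by simp
  also have "\<dots> = (\<Sum>i\<in>I. c i * card {y\<in>X. g y = i})"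
    by (intro sum.cong refl) simp
  finally show ?thesis .
qed

lemma subset_sums_eq_sumset_over:
  fixes c :: "'i \<Rightarrow> nat"
  assumes Y: "finite Y" and I: "finite I" and g: "g ` Y \<subseteq> I"
  shows "{\<Sum>y\<in>X. c (g y) | X. X \<subseteq> Y} =
         sumset_over I (\<lambda>i. {c i * k | k. k \<le> card {y\<in>Y. g y = i}})"
proof (intro equalityI subsetI)
  fix p assume "p \<in> {\<Sum>y\<in>X. c (g y) | X. X \<subseteq> Y}"
  then obtain X where X: "X \<subseteq> Y" and p: "p = (\<Sum>y\<in>X. c (g y))" by blast
  have "g ` X \<subseteq> I" using X g by blast
  then have "p = (\<Sum>i\<in>I. c i * card {y\<in>X. g y = i})"
    using p sum_comp_eq_sum_card_fibres[OF finite_subset[OF X Y] I] by simp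
  moreover have "card {y\<in>X. g y = i} \<le> card {y\<in>Y. g y = i}" for i
    using X Y by (intro card_mono) auto
  ultimately show "p \<in> sumset_over I (\<lambda>i. {c i * k | k. k \<le> card {y\<in>Y. g y = i}})"
    unfolding sumset_over_def by blast
next
  fix p assume "p \<in> sumset_over I (\<lambda>i. {c i * k | k. k \<le> card {y\<in>Y. g y = i}})"
  then obtain a where p: "p = (\<Sum>i\<in>I. a i)"
    and a: "\<forall>i\<in>I. \<exists>k. a i = c i * k \<and> k \<le> card {y\<in>Y. g y = i}"
    unfolding sumset_over_def by blast
  have "\<forall>i\<in>I. \<exists>Z. Z \<subseteq> {y\<in>Y. g y = i} \<and> a i = c i * card Z"
  proof
    fix i assume "i \<in> I"
    then obtain k where k: "a i = c i * k" "k \<le> card {y\<in>Y. g y = i}" using a by blast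
    obtain Z where "Z \<subseteq> {y\<in>Y. g y = i}" "card Z = k"
      using obtain_subset_with_card_n[OF k(2)] by blast
    then show "\<exists>Z. Z \<subseteq> {y\<in>Y. g y = i} \<and> a i = c i * card Z" using k by blast
  qed
  then obtain Z where Z: "\<forall>i\<in>I. Z i \<subseteq> {y\<in>Y. g y = i} \<and> a i = c i * card (Z i)"
    using bchoice by metis
  define X where "X = (\<Union>i\<in>I. Z i)"
  have XY: "X \<subseteq> Y" unfolding X_def using Z by blast
  have fibre: "{y\<in>X. g y = i} = Z i" if "i \<in> I" for i
    using Z that by (auto simp: X_def)
  have "g ` X \<subseteq> I" using XY g by blast
  then have "(\<Sum>y\<in>X. c (g y)) = (\<Sum>i\<in>I. c i * card {y\<in>X. g y = i})"
    using sum_comp_eq_sum_card_fibres[OF finite_subset[OF XY Y] I] by simp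
  also have "\<dots> = p"
    unfolding p
  proof (rule sum.cong)
    fix i assume "i \<in> I"
    then show "c i * card {y\<in>X. g y = i} = a i" using Z fibre by simp
  qed simp
  finally show "p \<in> {\<Sum>y\<in>X. c (g y) | X. X \<subseteq> Y}" using XY by blast
qed

lemma nfold_0_self: "nfold c {0, c} = {c * k | k. k \<le> c}"
proof -
  have fibre: "{y\<in>{..<c}. id y = i} = {i}" if "i \<in> {..<c}" for i
    using that by auto
  have single: "{c * k | k. k \<le> 1} = {0, c}"
  proof (intro equalityI subsetI)
    fix x assume "x \<in> {c * k | k. k \<le> 1}"
    then show "x \<in> {0, c}" by (auto simp: le_Suc_eq)
  next
    fix x assume "x \<in> {0, c}"
    then have "x = c * 0 \<or> x = c * 1" by auto
    then show "x \<in> {c * k | k. k \<le> 1}" by fastforce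
  qed
  have "{\<Sum>y\<in>X. c | X. X \<subseteq> {..<c}} =
      sumset_over {..<c} (\<lambda>i. {c * k | k. k \<le> card {y\<in>{..<c}. id y = i}})"
    by (rule subset_sums_eq_sumset_over[of "{..<c}" "{..<c}" id "\<lambda>_. c"]) auto
  also have "\<dots> = nfold c {0, c}"
    unfolding nfold_def using fibre single by (intro sumset_over_cong) simp
  finally have "nfold c {0, c} = {\<Sum>y\<in>X. c | X. X \<subseteq> {..<c}}" ..
  also have "\<dots> = {c * k | k. k \<le> c}"
  proof (intro equalityI subsetI)
    fix p assume "p \<in> {\<Sum>y\<in>X. c | X. X \<subseteq> {..<c}}"
    then obtain X where X: "X \<subseteq> {..<c}" "p = c * card X" by auto
    moreover have "card X \<le> c" using card_mono[OF _ X(1)] by simp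
    ultimately show "p \<in> {c * k | k. k \<le> c}" by blast
  next
    fix p assume "p \<in> {c * k | k. k \<le> c}"
    then obtain k where "p = c * k" "k \<le> c" by blast
    then have "p = (\<Sum>y\<in>{..<k}. c)" "{..<k} \<subseteq> {..<c}" by auto
    then show "p \<in> {\<Sum>y\<in>X. c | X. X \<subseteq> {..<c}}" by blast
  qed
  finally show ?thesis .
qed

lemma knuth_closed_avoiding_iota_delta_iff:
  "(\<exists>S. S \<subseteq> perms n \<and> knuth_closed n S \<and> card S = p \<and> iota n \<notin> S \<and> delta n \<notin> S) \<longleftrightarrow>
   (\<exists>X \<subseteq> {T. is_SYT n T \<and> shape T \<noteq> [n] \<and> shape T \<noteq> replicate n 1}.
      p = (\<Sum>P\<in>X. flam (shape P)))"
proof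
  assume "\<exists>S. S \<subseteq> perms n \<and> knuth_closed n S \<and> card S = p \<and> iota n \<notin> S \<and> delta n \<notin> S"
  then obtain \<P> where P: "\<forall>P\<in>\<P>. is_SYT n P" and p: "card (\<Union>P\<in>\<P>. knuth_class n P) = p"
    and avoid: "iota n \<notin> (\<Union>P\<in>\<P>. knuth_class n P)" "delta n \<notin> (\<Union>P\<in>\<P>. knuth_class n P)"
    unfolding knuth_closed_def by blast
  have "shape P \<noteq> [n] \<and> shape P \<noteq> replicate n 1" if "P \<in> \<P>" for P
    using that P avoid iota_or_delta_in_knuth_class_iff[of n P] by auto
  then have "\<P> \<subseteq> {T. is_SYT n T \<and> shape T \<noteq> [n] \<and> shape T \<noteq> replicate n 1}"
    using P by auto
  then show "\<exists>X \<subseteq> {T. is_SYT n T \<and> shape T \<noteq> [n] \<and> shape T \<noteq> replicate n 1}.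
      p = (\<Sum>P\<in>X. flam (shape P))"
    using card_UN_knuth_class[OF P] p by auto
next
  assume "\<exists>X \<subseteq> {T. is_SYT n T \<and> shape T \<noteq> [n] \<and> shape T \<noteq> replicate n 1}.
      p = (\<Sum>P\<in>X. flam (shape P))"
  then obtain X where X: "X \<subseteq> {T. is_SYT n T \<and> shape T \<noteq> [n] \<and> shape T \<noteq> replicate n 1}"
    and p: "p = (\<Sum>P\<in>X. flam (shape P))" by blast
  define S where "S = (\<Union>P\<in>X. knuth_class n P)"
  have P: "\<forall>P\<in>X. is_SYT n P" using X by auto
  then have "S \<subseteq> perms n" "knuth_closed n S"
    unfolding S_def knuth_closed_def knuth_class_def by blast+
  moreover have "card S = p" using card_UN_knuth_class[OF P] p S_def by simp
  moreover have "iota n \<notin> knuth_class n P \<and> delta n \<notin> knuth_class n P" if "P \<in> X" for P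
    using that X iota_or_delta_in_knuth_class_iff[of n P] by auto
  then have "iota n \<notin> S" "delta n \<notin> S" unfolding S_def by auto
  ultimately show "\<exists>S. S \<subseteq> perms n \<and> knuth_closed n S \<and> card S = p \<and> iota n \<notin> S \<and> delta n \<notin> S"
    by blast
qed

theorem proposition4p6:
  fixes n p :: nat
  shows "(\<exists>S. S \<subseteq> perms n \<and> knuth_closed n S \<and> card S = p \<and>
              iota n \<notin> S \<and> delta n \<notin> S)
         \<longleftrightarrow> p \<in> sumset_over {lam. is_partition n lam \<and> lam \<noteq> replicate n 1 \<and> lam \<noteq> [n]}
                               (\<lambda>lam. nfold (flam lam) {0, flam lam})"
proof -
  define Lam where "Lam = {lam. is_partition n lam \<and> lam \<noteq> replicate n 1 \<and> lam \<noteq> [n]}"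
  define Y where "Y = {T. is_SYT n T \<and> shape T \<noteq> [n] \<and> shape T \<noteq> replicate n 1}"
  have "finite Y" unfolding Y_def using finite_SYT by (rule finite_subset[rotated]) auto
  moreover have "finite Lam"
    unfolding Lam_def using finite_partitions by (rule finite_subset[rotated]) auto
  moreover have "shape ` Y \<subseteq> Lam" by (auto simp: Y_def Lam_def is_SYT_def)
  ultimately have sums: "{\<Sum>P\<in>X. flam (shape P) | X. X \<subseteq> Y} =
      sumset_over Lam (\<lambda>lam. {flam lam * k | k. k \<le> card {P\<in>Y. shape P = lam}})"
    by (rule subset_sums_eq_sumset_over)
  have "{P\<in>Y. shape P = lam} = {T. is_SYT (sum_list lam) T \<and> shape T = lam}" if "lam \<in> Lam" for lam
    using that by (auto simp: Y_def Lam_def is_partition_def)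
  then have "sumset_over Lam (\<lambda>lam. {flam lam * k | k. k \<le> card {P\<in>Y. shape P = lam}}) =
      sumset_over Lam (\<lambda>lam. nfold (flam lam) {0, flam lam})"
    by (intro sumset_over_cong) (simp add: nfold_0_self flam_def)
  note sumsets = this
  have "(\<exists>S. S \<subseteq> perms n \<and> knuth_closed n S \<and> card S = p \<and> iota n \<notin> S \<and> delta n \<notin> S) \<longleftrightarrow>
      (\<exists>X\<subseteq>Y. p = (\<Sum>P\<in>X. flam (shape P)))"
    unfolding Y_def by (rule knuth_closed_avoiding_iota_delta_iff)
  also have "\<dots> \<longleftrightarrow> p \<in> {\<Sum>P\<in>X. flam (shape P) | X. X \<subseteq> Y}" by blast
  also have "\<dots> \<longleftrightarrow> p \<in> sumset_over Lam (\<lambda>lam. nfold (flam lam) {0, flam lam})"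
    by (simp only: sums sumsets)
  finally show ?thesis unfolding Lam_def .
qed

end
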